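(* For every $E\subseteq\mathbb{F}_q^2$, $\Psi(2,2)\le\Psi(3,1)$.
   Context: $O(\mathbb{F}_q^2)$ is the group of $2\times2$ matrices $\theta$ over $\mathbb{F}_q$ ($q$ odd) with $\theta^T\theta=I$. $\lambda_\theta(w)=|\{(u,v)\in E^2: u-\theta v=w\}|$. For positive integers $a,b$, $$\Psi(a,b)=\sum_{x,x'\in\mathbb{F}_q^2}\ \sum_{\theta,\phi\in O(\mathbb{F}_q^2)}\lambda_\theta(x-\theta x')^a\,\lambda_\phi(x-\phi x')^b.$$ *)

theory Defs
  imports "HOL-Analysis.Analysis"
begin

definition orth2 :: "('a::field ^ 2 ^ 2) set" where
  "orth2 = {\<theta>. transpose \<theta> ** \<theta> = mat 1}"

definition lam :: "('a::field ^ 2) set \<Rightarrow> 'a ^ 2 ^ 2 \<Rightarrow> 'a ^ 2 \<Rightarrow> nat" where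
  "lam E \<theta> w = card {(u, v). u \<in> E \<and> v \<in> E \<and> u - \<theta> *v v = w}"

definition Psi :: "('a::{finite,field} ^ 2) set \<Rightarrow> nat \<Rightarrow> nat \<Rightarrow> nat" where
  "Psi E a b = (\<Sum>x\<in>UNIV. \<Sum>x'\<in>UNIV. \<Sum>\<theta>\<in>orth2. \<Sum>\<phi>\<in>orth2.
      lam E \<theta> (x - \<theta> *v x') ^ a * lam E \<phi> (x - \<phi> *v x') ^ b)"

end

theory Submission
  imports Defs
begin

text \<open>For fixed x, x' the inequality holds termwise in the outer sums: with
  g(\<theta>) = lam E \<theta> (x - \<theta> x'), symmetrising over the pair (\<theta>, \<phi>) reduces
  \<Sum> g(\<theta>)^2 g(\<phi>)^2 \<le> \<Sum> g(\<theta>)^3 g(\<phi>) to the pointwise AM-GM bound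
  2 a^2 b^2 \<le> a^3 b + a b^3, i.e. a b (a - b)^2 \<ge> 0.  Nothing about the
  orthogonal group, or the parity of q, is used.\<close>

lemma two_sq_mult_sq_le: "2 * ((a::nat)^2 * b^2) \<le> a^3 * b + b^3 * a"
proof -
  have "0 \<le> int a * int b * (int a - int b)^2" by simp
  then have "int (2 * (a^2 * b^2)) \<le> int (a^3 * b + b^3 * a)"
    by (simp add: power2_eq_square power3_eq_cube algebra_simps)
  then show ?thesis by linarith
qed

lemma double_sum_sq_mult_sq_le:
  fixes f :: "'b \<Rightarrow> nat"
  shows "(\<Sum>i\<in>A. \<Sum>j\<in>A. f i ^ 2 * f j ^ 2) \<le> (\<Sum>i\<in>A. \<Sum>j\<in>A. f i ^ 3 * f j ^ 1)"
proof -
  have "2 * (\<Sum>i\<in>A. \<Sum>j\<in>A. f i ^ 2 * f j ^ 2) = (\<Sum>i\<in>A. \<Sum>j\<in>A. 2 * (f i ^ 2 * f j ^ 2))"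
    by (simp add: sum_distrib_left)
  also have "\<dots> \<le> (\<Sum>i\<in>A. \<Sum>j\<in>A. f i ^ 3 * f j + f j ^ 3 * f i)"
    by (intro sum_mono two_sq_mult_sq_le)
  also have "\<dots> = (\<Sum>i\<in>A. \<Sum>j\<in>A. f i ^ 3 * f j) + (\<Sum>j\<in>A. \<Sum>i\<in>A. f j ^ 3 * f i)"
    by (simp add: sum.distrib sum.swap[of "\<lambda>i j. f j ^ 3 * f i"])
  also have "\<dots> = 2 * (\<Sum>i\<in>A. \<Sum>j\<in>A. f i ^ 3 * f j ^ 1)"
    by simp
  finally show ?thesis by linarith
qed

theorem lemma3p2:
  fixes E :: "('a::{finite,field} ^ 2) set"
  assumes "odd CARD('a)"
  shows "Psi E 2 2 \<le> Psi E 3 1"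
  unfolding Psi_def
  by (intro sum_mono double_sum_sq_mult_sq_le)

end
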